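(* Let $G$ be a graph, $b\ge 0$ an integer and $\beta:E(G)\to\{0,1,2,3\}$, and let $v\in V(G)$ be a vertex of degree one. Then $G-\{v\}$ admits a $b$-bend $\beta$-restricted RAC drawing (with $\beta$ restricted to $E(G-\{v\})$) if and only if $G$ admits a $b$-bend $\beta$-restricted RAC drawing.
   Context: All graphs are simple and undirected. A drawing of a graph $G=(V,E)$ maps vertices injectively to points of $\mathbb{R}^2$ and each edge $uv$ to a simple curve joining the images of $u$ and $v$, such that no vertex image lies in the relative interior of the image of an edge not incident to it. A polyline drawing is a drawing in which each edge is drawn as a union of closed straight-line segments $\lambda_1,\dots,\lambda_t$, where consecutive segments share exactly one endpoint and form an angle different from $180^\circ$, and non-consecutive segments are disjoint; the shared points of consecutive segments are the bends of the edge. A crossing of two edges is a common point of the relative interiors of their drawings; drawings have finitely many crossings. Two edges have a right-angle crossing if the crossing lies in the relative interiors of the respective segments and these segments are orthogonal. Given $b\in\mathbb{N}$ and $\beta:E\to\{0,1,2,3\}$, a $b$-bend $\beta$-restricted RAC drawing of $G$ is a polyline drawing in which every crossing is a right-angle crossing, the total number of bends is at most $b$, and each edge $e$ has at most $\beta(e)$ bends. *)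

theory Defs
  imports "HOL-Analysis.Analysis"
begin

type_synonym point = "real ^ 2"

definition simple_graph :: "'a set \<Rightarrow> 'a set set \<Rightarrow> bool" where
  "simple_graph V E \<longleftrightarrow> finite V \<and> (\<forall>e\<in>E. \<exists>u v. e = {u, v} \<and> u \<noteq> v \<and> u \<in> V \<and> v \<in> V)"

definition degree :: "'a set set \<Rightarrow> 'a \<Rightarrow> nat" where
  "degree E v = card {e \<in> E. v \<in> e}"

definition del_vertex_E :: "'a set set \<Rightarrow> 'a \<Rightarrow> 'a set set" where
  "del_vertex_E E v = {e \<in> E. v \<notin> e}"

text \<open>A polyline is given by the list of its points p_0, ..., p_t (t >= 1):
  endpoints p_0, p_t and bends p_1, ..., p_(t-1). The i-th segment is [p_i, p_(i+1)].\<close>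
definition seg :: "point list \<Rightarrow> nat \<Rightarrow> point set" where
  "seg ps i = closed_segment (ps ! i) (ps ! Suc i)"

definition nsegs :: "point list \<Rightarrow> nat" where
  "nsegs ps = length ps - 1"

definition curve :: "point list \<Rightarrow> point set" where
  "curve ps = (\<Union>i<nsegs ps. seg ps i)"

definition rel_interior_curve :: "point list \<Rightarrow> point set" where
  "rel_interior_curve ps = curve ps - {hd ps, last ps}"

definition nbends :: "point list \<Rightarrow> nat" where
  "nbends ps = length ps - 2"

definition polyline :: "point list \<Rightarrow> bool" where
  "polyline ps \<longleftrightarrow> length ps \<ge> 2
    \<and> (\<forall>i < nsegs ps. ps ! i \<noteq> ps ! Suc i)
    \<and> (\<forall>i. Suc i < nsegs ps \<longrightarrow>
          seg ps i \<inter> seg ps (Suc i) = {ps ! Suc i}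
          \<and> ps ! Suc i \<notin> open_segment (ps ! i) (ps ! Suc (Suc i)))
    \<and> (\<forall>i j. i < nsegs ps \<and> j < nsegs ps \<and> Suc i < j \<longrightarrow> seg ps i \<inter> seg ps j = {})"

definition crossings :: "point list \<Rightarrow> point list \<Rightarrow> point set" where
  "crossings ps qs = rel_interior_curve ps \<inter> rel_interior_curve qs"

definition polyline_drawing ::
  "'a set \<Rightarrow> 'a set set \<Rightarrow> ('a \<Rightarrow> point) \<Rightarrow> ('a set \<Rightarrow> point list) \<Rightarrow> bool" where
  "polyline_drawing V E pos D \<longleftrightarrow>
     inj_on pos V
   \<and> (\<forall>e\<in>E. polyline (D e) \<and> {hd (D e), last (D e)} = pos ` e)
   \<and> (\<forall>e\<in>E. \<forall>w\<in>V. w \<notin> e \<longrightarrow> pos w \<notin> rel_interior_curve (D e))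
   \<and> (\<forall>e\<in>E. \<forall>f\<in>E. e \<noteq> f \<longrightarrow> finite (crossings (D e) (D f)))"

definition right_angle_crossing :: "point list \<Rightarrow> point list \<Rightarrow> point \<Rightarrow> bool" where
  "right_angle_crossing ps qs x \<longleftrightarrow>
     (\<exists>i < nsegs ps. \<exists>j < nsegs qs.
        x \<in> open_segment (ps ! i) (ps ! Suc i) \<and> x \<in> open_segment (qs ! j) (qs ! Suc j)
      \<and> orthogonal (ps ! Suc i - ps ! i) (qs ! Suc j - qs ! j))"

definition restricted_RAC_drawing ::
  "'a set \<Rightarrow> 'a set set \<Rightarrow> nat \<Rightarrow> ('a set \<Rightarrow> nat) \<Rightarrow> ('a \<Rightarrow> point) \<Rightarrow> ('a set \<Rightarrow> point list) \<Rightarrow> bool" where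
  "restricted_RAC_drawing V E b \<beta> pos D \<longleftrightarrow>
     polyline_drawing V E pos D
   \<and> (\<forall>e\<in>E. \<forall>f\<in>E. e \<noteq> f \<longrightarrow> (\<forall>x \<in> crossings (D e) (D f). right_angle_crossing (D e) (D f) x))
   \<and> (\<Sum>e\<in>E. nbends (D e)) \<le> b
   \<and> (\<forall>e\<in>E. nbends (D e) \<le> \<beta> e)"

definition admits_restricted_RAC ::
  "'a set \<Rightarrow> 'a set set \<Rightarrow> nat \<Rightarrow> ('a set \<Rightarrow> nat) \<Rightarrow> bool" where
  "admits_restricted_RAC V E b \<beta> \<longleftrightarrow> (\<exists>pos D. restricted_RAC_drawing V E b \<beta> pos D)"

end

theory Submission
  imports Defs
begin

text \<open>Deleting a leaf v clearly preserves a drawing. Conversely, given a drawing of G - v,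
  attach v to its neighbour u by a single straight segment starting at the image of u. Its
  direction is chosen parallel to none of the finitely many segments of the drawing, so the
  new segment meets each of them at most in the image of u, and it is taken short enough to
  miss every segment and vertex not passing through the image of u. The new edge then has no
  bends and no crossings at all, so every constraint of the drawing is preserved.\<close>

lemma exists_vector_off_lines:
  fixes W :: "'a::euclidean_space set"
  assumes "finite W" and "DIM('a) \<ge> 2"
  shows "\<exists>d. d \<noteq> 0 \<and> (\<forall>w\<in>W. d \<notin> span {w})"
proof -
  have "negligible (span {w})" for w :: 'a
    using assms(2) by (intro negligible_lowdim) simp
  then have "negligible (\<Union>w\<in>insert 0 W. span {w})"
    using assms(1) by (intro negligible_Union) auto
  then obtain d where "d \<notin> (\<Union>w\<in>insert 0 W. span {w})"
    using non_negligible_UNIV by (metis UNIV_eq_I)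
  then show ?thesis by auto
qed

lemma closed_segment_transversal_Int:
  fixes a c x d :: "'a::real_vector"
  assumes "x \<in> closed_segment a c" and "d \<notin> span {c - a}"
  shows "closed_segment x (x + d) \<inter> closed_segment a c \<subseteq> {x}"
proof
  fix y assume y: "y \<in> closed_segment x (x + d) \<inter> closed_segment a c"
  obtain s where s: "y = x + s *\<^sub>R d"
    using y by (auto simp: closed_segment_def algebra_simps)
  obtain g where g: "y = a + g *\<^sub>R (c - a)"
    using y by (auto simp: closed_segment_def algebra_simps)
  obtain h where h: "x = a + h *\<^sub>R (c - a)"
    using assms(1) by (auto simp: closed_segment_def algebra_simps)
  have "s *\<^sub>R d = (g - h) *\<^sub>R (c - a)"
    using s g h by (simp add: algebra_simps)
  then have "s = 0 \<or> d \<in> span {c - a}"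
    by (metis span_base span_mul singletonI vector_fraction_eq_iff)
  then show "y \<in> {x}"
    using assms(2) s by auto
qed

lemma eventually_closed_segment_disjoint:
  fixes x d :: "'a::real_normed_vector"
  assumes "closed S" and "x \<notin> S"
  shows "\<forall>\<^sub>F t in at 0. closed_segment x (x + t *\<^sub>R d) \<inter> S = {}"
proof -
  obtain e where e: "e > 0" "ball x e \<inter> S = {}"
    using assms open_contains_ball[of "- S"] by blast
  have "\<forall>\<^sub>F t in at 0. norm (t *\<^sub>R d) < e"
    using e(1) by (intro order_tendstoD tendsto_norm_zero) (auto intro!: tendsto_eq_intros)
  then show ?thesis
  proof eventually_elim
    case (elim t)
    then have "closed_segment x (x + t *\<^sub>R d) \<subseteq> ball x e"
      using e(1) by (intro closed_segment_subset) (auto simp: dist_norm)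
    then show ?case using e(2) by blast
  qed
qed

lemma exists_segment_avoiding_segments:
  fixes x :: "'a::euclidean_space" and F :: "('a \<times> 'a) set"
  assumes "finite F" and "DIM('a) \<ge> 2"
  shows "\<exists>p. p \<noteq> x \<and> (\<forall>(a, c)\<in>F. closed_segment x p \<inter> closed_segment a c \<subseteq> {x})"
proof -
  obtain d where d: "d \<noteq> 0" "\<forall>(a, c)\<in>F. d \<notin> span {c - a}"
    using exists_vector_off_lines[of "(\<lambda>(a, c). c - a) ` F"] assms by fastforce
  have "\<forall>\<^sub>F t in at_right 0. closed_segment x (x + t *\<^sub>R d) \<inter> closed_segment a c \<subseteq> {x}"
    if "(a, c) \<in> F" for a c
  proof (cases "x \<in> closed_segment a c")
    case True
    have "t *\<^sub>R d \<notin> span {c - a}" if "t > 0" for t :: real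
      using d(2) \<open>(a, c) \<in> F\<close> that span_mul[of "t *\<^sub>R d" _ "inverse t"] by auto
    then show ?thesis
      by (intro eventually_mono[OF eventually_at_right_less] closed_segment_transversal_Int True)
  next
    case False
    then show ?thesis
      using eventually_closed_segment_disjoint[of "closed_segment a c" x d]
      by (auto simp: eventually_at_split elim!: eventually_mono)
  qed
  then have "\<forall>\<^sub>F t in at_right 0. t > 0 \<and>
      (\<forall>(a, c)\<in>F. closed_segment x (x + t *\<^sub>R d) \<inter> closed_segment a c \<subseteq> {x})"
    using assms(1) eventually_at_right_less[of 0]
    by (auto intro!: eventually_conj eventually_ball_finite)
  then obtain t :: real where "t > 0"
      "\<forall>(a, c)\<in>F. closed_segment x (x + t *\<^sub>R d) \<inter> closed_segment a c \<subseteq> {x}"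
    using eventually_happens trivial_limit_at_right_real by blast
  then show ?thesis
    using d(1) by (intro exI[of _ "x + t *\<^sub>R d"]) auto
qed

lemma curve_two_points [simp]: "curve [x, p] = closed_segment x p"
  by (simp add: curve_def nsegs_def seg_def lessThan_Suc)

lemma nbends_two_points [simp]: "nbends [x, p] = 0"
  by (simp add: nbends_def)

lemma polyline_two_points: "x \<noteq> p \<Longrightarrow> polyline [x, p]"
  by (simp add: polyline_def nsegs_def)

lemma crossings_touching_segment_empty:
  assumes "curve qs \<inter> closed_segment x p \<subseteq> {x}"
  shows "crossings [x, p] qs = {}" and "crossings qs [x, p] = {}"
  using assms by (auto simp: crossings_def rel_interior_curve_def)

lemma restricted_RAC_drawingI:
  assumes "inj_on pos V"
    and "\<forall>e\<in>E. polyline (D e) \<and> {hd (D e), last (D e)} = pos ` e"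
    and "\<forall>e\<in>E. \<forall>w\<in>V. w \<notin> e \<longrightarrow> pos w \<notin> rel_interior_curve (D e)"
    and "\<forall>e\<in>E. \<forall>f\<in>E. e \<noteq> f \<longrightarrow> finite (crossings (D e) (D f))"
    and "\<forall>e\<in>E. \<forall>f\<in>E. e \<noteq> f \<longrightarrow>
           (\<forall>x \<in> crossings (D e) (D f). right_angle_crossing (D e) (D f) x)"
    and "(\<Sum>e\<in>E. nbends (D e)) \<le> b"
    and "\<forall>e\<in>E. nbends (D e) \<le> \<beta> e"
  shows "restricted_RAC_drawing V E b \<beta> pos D"
  unfolding restricted_RAC_drawing_def polyline_drawing_def using assms by (intro conjI)

lemma restricted_RAC_drawingD:
  assumes "restricted_RAC_drawing V E b \<beta> pos D"
  shows "inj_on pos V"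
    and "\<forall>e\<in>E. polyline (D e) \<and> {hd (D e), last (D e)} = pos ` e"
    and "\<forall>e\<in>E. \<forall>w\<in>V. w \<notin> e \<longrightarrow> pos w \<notin> rel_interior_curve (D e)"
    and "\<forall>e\<in>E. \<forall>f\<in>E. e \<noteq> f \<longrightarrow> finite (crossings (D e) (D f))"
    and "\<forall>e\<in>E. \<forall>f\<in>E. e \<noteq> f \<longrightarrow>
           (\<forall>x \<in> crossings (D e) (D f). right_angle_crossing (D e) (D f) x)"
    and "(\<Sum>e\<in>E. nbends (D e)) \<le> b"
    and "\<forall>e\<in>E. nbends (D e) \<le> \<beta> e"
  using assms unfolding restricted_RAC_drawing_def polyline_drawing_def by simp_all

lemma restricted_RAC_drawing_mono:
  assumes drawing: "restricted_RAC_drawing V E b \<beta> pos D"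
    and "V' \<subseteq> V" and "E' \<subseteq> E" and "finite E"
  shows "restricted_RAC_drawing V' E' b \<beta> pos D"
proof -
  note old = restricted_RAC_drawingD[OF drawing]
  have "(\<Sum>e\<in>E'. nbends (D e)) \<le> (\<Sum>e\<in>E. nbends (D e))"
    using assms(3,4) by (intro sum_mono2) simp_all
  with old(6) have "(\<Sum>e\<in>E'. nbends (D e)) \<le> b"
    by linarith
  moreover have "inj_on pos V'"
    using old(1) assms(2) by (rule inj_on_subset)
  moreover have "\<forall>e\<in>E'. \<forall>w\<in>V'. w \<notin> e \<longrightarrow> pos w \<notin> rel_interior_curve (D e)"
    using old(3) assms(2,3) by blast
  ultimately show ?thesis
    using old(2,4,5,7) assms(3) by (intro restricted_RAC_drawingI) (simp_all add: subset_iff)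
qed

lemma admits_restricted_RAC_mono:
  assumes "admits_restricted_RAC V E b \<beta>" and "V' \<subseteq> V" and "E' \<subseteq> E" and "finite E"
  shows "admits_restricted_RAC V' E' b \<beta>"
  using assms restricted_RAC_drawing_mono unfolding admits_restricted_RAC_def by blast

lemma restricted_RAC_drawing_add_pendant:
  assumes drawing: "restricted_RAC_drawing V E b \<beta> pos D" and "finite E"
    and "u \<in> V" and "v \<notin> V" and v_isolated: "\<forall>e\<in>E. v \<notin> e"
    and "p \<noteq> pos u"
    and avoids_vertices: "\<forall>w\<in>V - {u}. pos w \<notin> closed_segment (pos u) p"
    and avoids_edges: "\<forall>f\<in>E. curve (D f) \<inter> closed_segment (pos u) p \<subseteq> {pos u}"
  shows "restricted_RAC_drawing (insert v V) (insert {v, u} E) b \<beta>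
           (pos(v := p)) (D({v, u} := [pos u, p]))"
    (is "restricted_RAC_drawing ?V ?E b \<beta> ?pos ?D")
proof (rule restricted_RAC_drawingI)
  note old = restricted_RAC_drawingD[OF drawing]
  have "u \<noteq> v" and new_edge: "{v, u} \<notin> E"
    using \<open>u \<in> V\<close> \<open>v \<notin> V\<close> v_isolated by auto
  have D_old: "?D f = D f" and pos_old: "?pos ` f = pos ` f" if "f \<in> E" for f
    using that new_edge v_isolated by (auto intro!: image_cong)
  have "p \<noteq> pos w" if "w \<in> V" for w
    using that \<open>p \<noteq> pos u\<close> avoids_vertices by (cases "w = u") auto
  with old(1) \<open>v \<notin> V\<close> show "inj_on ?pos ?V"
    by (auto simp: inj_on_def)
  have "p \<notin> curve (D f)" if "f \<in> E" for f
    using that avoids_edges \<open>p \<noteq> pos u\<close> by blast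
  then show "\<forall>e\<in>?E. \<forall>w\<in>?V. w \<notin> e \<longrightarrow> ?pos w \<notin> rel_interior_curve (?D e)"
    using old(3) avoids_vertices \<open>v \<notin> V\<close> D_old
    by (auto simp: rel_interior_curve_def)
  show "\<forall>e\<in>?E. polyline (?D e) \<and> {hd (?D e), last (?D e)} = ?pos ` e"
    using old(2) D_old pos_old \<open>u \<noteq> v\<close> \<open>p \<noteq> pos u\<close>
    by (auto simp: polyline_two_points)
  have no_new_crossings: "crossings (?D e) (?D f) = {}"
    if "e \<in> ?E" "f \<in> ?E" "e \<noteq> f" "e \<notin> E \<or> f \<notin> E" for e f
    using that D_old avoids_edges crossings_touching_segment_empty by auto
  show "\<forall>e\<in>?E. \<forall>f\<in>?E. e \<noteq> f \<longrightarrow> finite (crossings (?D e) (?D f))"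
  proof (intro ballI impI)
    fix e f assume "e \<in> ?E" "f \<in> ?E" "e \<noteq> f"
    then show "finite (crossings (?D e) (?D f))"
      using old(4) D_old no_new_crossings by (cases "e \<in> E \<and> f \<in> E") auto
  qed
  show "\<forall>e\<in>?E. \<forall>f\<in>?E. e \<noteq> f \<longrightarrow>
          (\<forall>x \<in> crossings (?D e) (?D f). right_angle_crossing (?D e) (?D f) x)"
  proof (intro ballI impI)
    fix e f x assume "e \<in> ?E" "f \<in> ?E" "e \<noteq> f" "x \<in> crossings (?D e) (?D f)"
    then show "right_angle_crossing (?D e) (?D f) x"
      using old(5) D_old no_new_crossings by (cases "e \<in> E \<and> f \<in> E") auto
  qed
  show "(\<Sum>e\<in>?E. nbends (?D e)) \<le> b"
    using old(6) \<open>finite E\<close> new_edge D_old by (simp add: sum.insert_if)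
  show "\<forall>e\<in>?E. nbends (?D e) \<le> \<beta> e"
    using old(7) D_old by simp
qed

lemma exists_pendant_endpoint:
  assumes "inj_on pos V" and "finite V" and "finite E" and "u \<in> V"
  shows "\<exists>p. p \<noteq> pos u \<and> (\<forall>w\<in>V - {u}. pos w \<notin> closed_segment (pos u) p)
             \<and> (\<forall>f\<in>E. curve (D f) \<inter> closed_segment (pos u) p \<subseteq> {pos u})"
proof -
  \<comment> \<open>vertices other than u enter as degenerate segments\<close>
  define F where "F = (\<Union>f\<in>E. (\<lambda>i. (D f ! i, D f ! Suc i)) ` {..<nsegs (D f)})
                      \<union> (\<lambda>w. (pos w, pos w)) ` (V - {u})"
  have "finite F"
    unfolding F_def using assms(2,3) by simp
  then obtain p where "p \<noteq> pos u"
      and avoids: "\<forall>(a, c)\<in>F. closed_segment (pos u) p \<inter> closed_segment a c \<subseteq> {pos u}"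
    using exists_segment_avoiding_segments[of F "pos u"] by auto
  have "pos w \<notin> closed_segment (pos u) p" if "w \<in> V - {u}" for w
  proof
    assume "pos w \<in> closed_segment (pos u) p"
    moreover have "(pos w, pos w) \<in> F"
      unfolding F_def using that by blast
    ultimately have "pos w = pos u"
      using avoids by auto
    with assms(1,4) that show False
      by (metis DiffE inj_onD singletonI)
  qed
  moreover have "curve (D f) \<inter> closed_segment (pos u) p \<subseteq> {pos u}" if "f \<in> E" for f
  proof
    fix y assume y: "y \<in> curve (D f) \<inter> closed_segment (pos u) p"
    then obtain i where "i < nsegs (D f)" and "y \<in> closed_segment (D f ! i) (D f ! Suc i)"
      unfolding curve_def seg_def by blast
    moreover have "(D f ! i, D f ! Suc i) \<in> F"
      unfolding F_def using that \<open>i < nsegs (D f)\<close> by blast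
    ultimately show "y \<in> {pos u}"
      using avoids y by blast
  qed
  ultimately show ?thesis
    using \<open>p \<noteq> pos u\<close> by blast
qed

lemma admits_restricted_RAC_add_pendant:
  assumes "admits_restricted_RAC V E b \<beta>" and "finite V" and "finite E"
    and "u \<in> V" and "v \<notin> V" and "\<forall>e\<in>E. v \<notin> e"
  shows "admits_restricted_RAC (insert v V) (insert {v, u} E) b \<beta>"
proof -
  obtain pos D where drawing: "restricted_RAC_drawing V E b \<beta> pos D"
    using assms(1) unfolding admits_restricted_RAC_def by blast
  obtain p where "p \<noteq> pos u" "\<forall>w\<in>V - {u}. pos w \<notin> closed_segment (pos u) p"
      "\<forall>f\<in>E. curve (D f) \<inter> closed_segment (pos u) p \<subseteq> {pos u}"
    using exists_pendant_endpoint[OF restricted_RAC_drawingD(1)[OF drawing] assms(2-4)] by blast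
  with drawing assms(3-6) show ?thesis
    unfolding admits_restricted_RAC_def by (metis restricted_RAC_drawing_add_pendant)
qed

lemma simple_graph_finite_edges:
  assumes "simple_graph V E"
  shows "finite E"
proof (rule finite_subset)
  show "E \<subseteq> Pow V"
  proof
    fix e assume "e \<in> E"
    then obtain a c where "e = {a, c}" "a \<in> V" "c \<in> V"
      using assms unfolding simple_graph_def by blast
    then show "e \<in> Pow V" by simp
  qed
  show "finite (Pow V)"
    using assms unfolding simple_graph_def by simp
qed

lemma simple_graph_degree_one_edge:
  assumes "simple_graph V E" and "degree E v = 1"
  obtains u where "u \<in> V" and "u \<noteq> v" and "{e \<in> E. v \<in> e} = {{v, u}}"
proof -
  obtain e where e: "{e \<in> E. v \<in> e} = {e}"
    using assms(2) unfolding degree_def by (rule card_1_singletonE)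
  then have "e \<in> E" and "v \<in> e" by auto
  then obtain a c where "e = {a, c}" "a \<noteq> c" "a \<in> V" "c \<in> V"
    using assms(1) unfolding simple_graph_def by blast
  with \<open>v \<in> e\<close> have "e = {v, c} \<and> c \<noteq> v \<and> c \<in> V \<or> e = {v, a} \<and> a \<noteq> v \<and> a \<in> V"
    by auto
  with e that show ?thesis by metis
qed

theorem mainTheorem2:
  fixes V :: "'a set" and E :: "'a set set" and b :: nat and \<beta> :: "'a set \<Rightarrow> nat" and v :: 'a
  assumes "simple_graph V E"
    and "\<forall>e\<in>E. \<beta> e \<le> 3"
    and "v \<in> V"
    and "degree E v = 1"
  shows "admits_restricted_RAC (V - {v}) (del_vertex_E E v) b \<beta> \<longleftrightarrow> admits_restricted_RAC V E b \<beta>"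
proof -
  have "finite V"
    using assms(1) by (simp add: simple_graph_def)
  have "finite E"
    using assms(1) by (rule simple_graph_finite_edges)
  obtain u where "u \<in> V" "u \<noteq> v" and edges_at_v: "{e \<in> E. v \<in> e} = {{v, u}}"
    using assms(1,4) by (rule simple_graph_degree_one_edge)
  let ?E' = "del_vertex_E E v"
  have E_eq: "E = insert {v, u} ?E'" and "\<forall>e\<in>?E'. v \<notin> e"
    using edges_at_v unfolding del_vertex_E_def by blast+
  have "?E' \<subseteq> E"
    unfolding del_vertex_E_def by blast
  have V_eq: "insert v (V - {v}) = V"
    using assms(3) by (rule insert_Diff)
  show ?thesis
  proof
    assume "admits_restricted_RAC (V - {v}) ?E' b \<beta>"
    then have "admits_restricted_RAC (insert v (V - {v})) (insert {v, u} ?E') b \<beta>"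
      using \<open>finite V\<close> finite_subset[OF \<open>?E' \<subseteq> E\<close> \<open>finite E\<close>] \<open>u \<in> V\<close> \<open>u \<noteq> v\<close>
        \<open>\<forall>e\<in>?E'. v \<notin> e\<close>
      by (intro admits_restricted_RAC_add_pendant) simp_all
    then show "admits_restricted_RAC V E b \<beta>"
      by (simp only: V_eq E_eq[symmetric])
  next
    assume "admits_restricted_RAC V E b \<beta>"
    then show "admits_restricted_RAC (V - {v}) ?E' b \<beta>"
      using Diff_subset \<open>?E' \<subseteq> E\<close> \<open>finite E\<close> by (rule admits_restricted_RAC_mono)
  qed
qed

end
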